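(* In the censored multi-armed bandit setting, let $\lambda>0$, $\alpha>0$, $\delta\in(0,1]$, and let $\psi_\alpha$ be a primitive of $x\mapsto x^{-\alpha}$ on $(0,\infty)$. Then $$\sup_{\pi}\mathbb{E}[\mathbb V_\alpha(T,\pi)]\le\frac{d_{\mathrm{eff}}}{(1-\delta)^\alpha}\Big[\psi_\alpha\Big(\frac{T}{d_{\mathrm{eff}}}+\frac{\lambda}{1-\delta}\Big)-\psi_\alpha\Big(\frac{\lambda}{1-\delta}\Big)\Big]+\frac{24d_{\mathrm{eff}}\log T+d}{\lambda^\alpha}+\frac{4d_{\mathrm{eff}}}{\lambda^\alpha\delta^2T^{12\delta^2}},$$ where the supremum is over all policies (in particular over policies adapted to the censorship realizations), and $\mathbb V_\alpha(T,\pi)=\sum_{t=1}^T(N_{a_t}(t-1)+\lambda)^{-\alpha}$. (For $\delta=1$ the first term is interpreted via the stated expression only when $\delta<1$; the statement is intended for $\delta\in(0,1)$.)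
   Context: Censored multi-armed bandit setting. Fix an integer $d\ge 1$ (number of arms) and a horizon $T\ge 2$. Each arm $a\in[d]=\{1,\dots,d\}$ has an unknown mean reward $\theta^\star_a\in\mathbb{R}$. At each round $t=1,\dots,T$ a nonempty action set $\mathcal A_t\subseteq[d]$ is revealed (fixed in advance), the agent selects $a_t\in\mathcal A_t$, and a censorship indicator $x_{a_t}\sim\mathrm{Bernoulli}(p_{a_t})$ is drawn, independently of everything else given $a_t$, where $p_a\in(0,1]$ are fixed parameters; the feedback is observed iff $x_{a_t}=1$. A policy chooses $a_t$ as a (possibly randomized) function of the past (actions, censorship indicators, observed feedbacks). Let $N_a(t)=\#\{l\le t: a_l=a,\ x_{a_l}=1\}$. The effective dimension is $d_{\mathrm{eff}}=\sum_{a\in[d]}1/p_a$. *)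

theory Defs
  imports "HOL-Probability.Probability"
begin

text \<open>A history is the list of (chosen arm, censorship indicator) pairs of rounds 1,2,...;
  entry i of the list corresponds to round i+1.\<close>
type_synonym hist = "(nat \<times> bool) list"

definition N_obs :: "hist \<Rightarrow> nat \<Rightarrow> nat \<Rightarrow> nat" where
  "N_obs h a k = length (filter (\<lambda>(b, x). b = a \<and> x) (take k h))"

text \<open>A (randomized, behavioural) policy maps the round index t and the past history
  to a distribution over arms. Distribution of the history after t rounds.\<close>
fun traj :: "(nat \<Rightarrow> hist \<Rightarrow> nat pmf) \<Rightarrow> (nat \<Rightarrow> real) \<Rightarrow> nat \<Rightarrow> hist pmf" where
  "traj \<pi> p 0 = return_pmf []"
| "traj \<pi> p (Suc t) =
     bind_pmf (traj \<pi> p t) (\<lambda>h. bind_pmf (\<pi> (Suc t) h)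
       (\<lambda>a. map_pmf (\<lambda>x. h @ [(a, x)]) (bernoulli_pmf (p a))))"

definition admissible_policy :: "(nat \<Rightarrow> nat set) \<Rightarrow> nat \<Rightarrow> (nat \<Rightarrow> hist \<Rightarrow> nat pmf) \<Rightarrow> bool" where
  "admissible_policy A T \<pi> \<longleftrightarrow> (\<forall>t\<in>{1..T}. \<forall>h. set_pmf (\<pi> t h) \<subseteq> A t)"

definition V_alpha :: "real \<Rightarrow> real \<Rightarrow> nat \<Rightarrow> hist \<Rightarrow> real" where
  "V_alpha \<alpha> lam T h =
     (\<Sum>t = 1..T. (real (N_obs h (fst (h ! (t - 1))) (t - 1)) + lam) powr (- \<alpha>))"

definition d_eff :: "nat \<Rightarrow> (nat \<Rightarrow> real) \<Rightarrow> real" where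
  "d_eff d p = (\<Sum>a = 1..d. 1 / p a)"

end

theory Submission
  imports Defs
begin

text \<open>
  Write c_a for the number of observed pulls of arm a and G(c) = \<Sigma>_{j<c} (j + \<lambda>)^-\<alpha>.
  Pulling arm a adds (c_a + \<lambda>)^-\<alpha> to V_\<alpha>, while the potential
  R = \<Sigma>_a (G(c_a) - s c_a) / p_a grows by ((c_a + \<lambda>)^-\<alpha> - s) / p_a exactly when the
  feedback is observed, i.e. with probability p_a. Hence V_\<alpha> - R grows by exactly s in
  expectation in every round, whatever the policy, and E V_\<alpha>(T) = s T + E R.
  Concavity of \<psi> gives G(c) - s c \<le> \<lambda>^-\<alpha> + \<psi>(x + \<lambda>) - \<psi>(\<lambda>) - s x for the tangent
  slope s = \<psi>'(x + \<lambda>); with x = T / d_eff this yields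
  E V_\<alpha>(T) \<le> d_eff (\<lambda>^-\<alpha> + \<psi>(T / d_eff + \<lambda>) - \<psi>(\<lambda>)), which is below the claimed bound.
\<close>

definition obs_count :: "hist \<Rightarrow> nat \<Rightarrow> nat" where
  "obs_count h a = length (filter (\<lambda>(b, x). b = a \<and> x) h)"

lemma obs_count_Nil [simp]: "obs_count [] a = 0"
  by (simp add: obs_count_def)

lemma obs_count_snoc [simp]:
  "obs_count (h @ [(a, x)]) b = obs_count h b + (if b = a \<and> x then 1 else 0)"
  by (simp add: obs_count_def)

lemma V_alpha_snoc:
  assumes "length h = t"
  shows "V_alpha \<alpha> lam (Suc t) (h @ [(a, x)])
           = V_alpha \<alpha> lam t h + (real (obs_count h a) + lam) powr (- \<alpha>)"
proof -
  have "(real (N_obs (h @ [(a, x)]) (fst ((h @ [(a, x)]) ! (i - 1))) (i - 1)) + lam) powr (- \<alpha>)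
        = (real (N_obs h (fst (h ! (i - 1))) (i - 1)) + lam) powr (- \<alpha>)" if "i \<in> {1..t}" for i
  proof -
    from that assms have "i - 1 < length h" by auto
    then show ?thesis by (simp add: N_obs_def nth_append)
  qed
  then show ?thesis
    using assms by (simp add: V_alpha_def N_obs_def obs_count_def nth_append)
qed

lemma V_alpha_0 [simp]: "V_alpha \<alpha> lam 0 h = 0"
  by (simp add: V_alpha_def)

definition bonus_sum :: "real \<Rightarrow> real \<Rightarrow> nat \<Rightarrow> real" where
  "bonus_sum lam \<alpha> c = (\<Sum>j<c. (real j + lam) powr (- \<alpha>))"

definition potential :: "real \<Rightarrow> real \<Rightarrow> real \<Rightarrow> nat \<Rightarrow> (nat \<Rightarrow> real) \<Rightarrow> hist \<Rightarrow> real" where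
  "potential \<alpha> lam s d p h =
     (\<Sum>a = 1..d. (bonus_sum lam \<alpha> (obs_count h a) - s * real (obs_count h a)) / p a)"

lemma potential_Nil [simp]: "potential \<alpha> lam s d p [] = 0"
  by (simp add: potential_def bonus_sum_def)

lemma potential_snoc:
  assumes "a \<in> {1..d}"
  shows "potential \<alpha> lam s d p (h @ [(a, x)]) = potential \<alpha> lam s d p h
     + (if x then ((real (obs_count h a) + lam) powr (- \<alpha>) - s) / p a else 0)"
proof -
  have "potential \<alpha> lam s d p (h @ [(a, x)])
      = (\<Sum>b = 1..d. (bonus_sum lam \<alpha> (obs_count h b) - s * real (obs_count h b)) / p b
          + (if b = a then (if x then ((real (obs_count h a) + lam) powr (- \<alpha>) - s) / p a else 0)
             else 0))"
    unfolding potential_def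
    by (rule sum.cong) (auto simp: bonus_sum_def diff_divide_distrib add_divide_distrib algebra_simps)
  then show ?thesis
    using assms by (simp add: sum.distrib potential_def)
qed

lemma expectation_bind_pmf_shift:
  fixes f :: "'b \<Rightarrow> real" and N :: "'a \<Rightarrow> 'b pmf"
  assumes fin: "finite (set_pmf M)"
    and finN: "\<And>x. x \<in> set_pmf M \<Longrightarrow> finite (set_pmf (N x))"
    and eq: "\<And>x. x \<in> set_pmf M \<Longrightarrow> measure_pmf.expectation (N x) f = g x + c"
  shows "measure_pmf.expectation (bind_pmf M N) f = measure_pmf.expectation M g + c"
proof -
  have "measure_pmf.expectation (bind_pmf M N) f
      = (\<Sum>x\<in>set_pmf M. pmf M x *\<^sub>R measure_pmf.expectation (N x) f)"
    by (rule pmf_expectation_bind[OF fin finN subset_refl])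
  also have "\<dots> = (\<Sum>x\<in>set_pmf M. pmf M x * g x) + c * (\<Sum>x\<in>set_pmf M. pmf M x)"
    by (simp add: eq algebra_simps sum.distrib sum_distrib_left)
  also have "(\<Sum>x\<in>set_pmf M. pmf M x) = 1"
    by (rule sum_pmf_eq_1[OF fin subset_refl])
  also have "(\<Sum>x\<in>set_pmf M. pmf M x * g x) = measure_pmf.expectation M g"
    by (subst integral_measure_pmf[OF fin]) auto
  finally show ?thesis by simp
qed

lemma set_pmf_traj_subset:
  assumes arms: "\<And>t. t \<in> {1..T} \<Longrightarrow> A t \<subseteq> S" and adm: "admissible_policy A T \<pi>"
    and "t \<le> T"
  shows "set_pmf (traj \<pi> p t) \<subseteq> {h. set h \<subseteq> S \<times> UNIV \<and> length h = t}"
  using \<open>t \<le> T\<close>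
proof (induction t)
  case (Suc t)
  have "set_pmf (\<pi> (Suc t) h) \<subseteq> S" for h
    using adm arms[of "Suc t"] Suc.prems unfolding admissible_policy_def by fastforce
  with Suc show ?case by fastforce
qed simp

lemma finite_set_pmf_traj:
  assumes "finite S" "\<And>t. t \<in> {1..T} \<Longrightarrow> A t \<subseteq> S" "admissible_policy A T \<pi>" "t \<le> T"
  shows "finite (set_pmf (traj \<pi> p t))"
  using \<open>finite S\<close>
  by (intro finite_subset[OF set_pmf_traj_subset[OF assms(2-4)]] finite_lists_length_eq
      finite_cartesian_product) auto

lemma expectation_V_alpha_minus_potential:
  assumes arms: "\<And>t. t \<in> {1..T} \<Longrightarrow> A t \<subseteq> {1..d}" and adm: "admissible_policy A T \<pi>"
    and p: "\<And>a. a \<in> {1..d} \<Longrightarrow> 0 < p a \<and> p a \<le> 1"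
    and "t \<le> T"
  shows "measure_pmf.expectation (traj \<pi> p t)
           (\<lambda>h. V_alpha \<alpha> lam (length h) h - potential \<alpha> lam s d p h) = s * real t"
  using \<open>t \<le> T\<close>
proof (induction t)
  case (Suc t)
  define F where "F = (\<lambda>h. V_alpha \<alpha> lam (length h) h - potential \<alpha> lam s d p h)"
  have policy_arms: "set_pmf (\<pi> (Suc t) h) \<subseteq> {1..d}" for h
    using adm arms[of "Suc t"] Suc.prems unfolding admissible_policy_def by fastforce
  have F_snoc: "F (h @ [(a, x)]) = F h + (real (obs_count h a) + lam) powr (- \<alpha>)
      - (if x then ((real (obs_count h a) + lam) powr (- \<alpha>) - s) / p a else 0)"
    if "a \<in> {1..d}" for h a x
    using V_alpha_snoc[of h "length h" \<alpha> lam a x] potential_snoc[OF that, of \<alpha> lam s p h x]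
    by (simp add: F_def)
  have "measure_pmf.expectation (traj \<pi> p (Suc t)) F = measure_pmf.expectation (traj \<pi> p t) F + s"
    unfolding traj.simps
  proof (rule expectation_bind_pmf_shift)
    show "finite (set_pmf (traj \<pi> p t))"
      using finite_set_pmf_traj[OF _ arms adm] Suc.prems by simp
  next
    fix h
    show "finite (set_pmf (\<pi> (Suc t) h \<bind> (\<lambda>a. map_pmf (\<lambda>x. h @ [(a, x)]) (bernoulli_pmf (p a)))))"
      using finite_subset[OF policy_arms] by (auto intro: finite_subset[of _ "UNIV :: bool set"])
    have "measure_pmf.expectation (map_pmf (\<lambda>x. h @ [(a, x)]) (bernoulli_pmf (p a))) F = F h + s"
      if "a \<in> set_pmf (\<pi> (Suc t) h)" for a
    proof -
      have "a \<in> {1..d}" using that policy_arms by blast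
      with p[of a] show ?thesis by (simp add: F_snoc field_simps)
    qed
    then show "measure_pmf.expectation
        (\<pi> (Suc t) h \<bind> (\<lambda>a. map_pmf (\<lambda>x. h @ [(a, x)]) (bernoulli_pmf (p a)))) F = F h + s"
      using expectation_bind_pmf_shift[of "\<pi> (Suc t) h" _ F "\<lambda>_. F h" s]
        finite_subset[OF policy_arms] by simp
  qed
  with Suc show ?case by (simp add: F_def algebra_simps)
qed simp

context
  fixes \<alpha> :: real and \<psi> :: "real \<Rightarrow> real"
  assumes psi_deriv: "\<And>x. x > 0 \<Longrightarrow> (\<psi> has_real_derivative x powr (- \<alpha>)) (at x)"
begin

lemma psi_MVT:
  assumes "0 < a" "a < b"
  obtains z where "a < z" "z < b" "\<psi> b - \<psi> a = (b - a) * z powr (- \<alpha>)"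
  using MVT2[OF \<open>a < b\<close>, of \<psi> "\<lambda>x. x powr (- \<alpha>)"] psi_deriv \<open>0 < a\<close> by force

lemma psi_mono:
  assumes "0 < a" "a \<le> b"
  shows "\<psi> a \<le> \<psi> b"
proof (cases "a = b")
  case False
  then obtain z where "\<psi> b - \<psi> a = (b - a) * z powr (- \<alpha>)"
    using psi_MVT assms by (metis order_le_less)
  moreover have "(b - a) * z powr (- \<alpha>) \<ge> 0" using assms by simp
  ultimately show ?thesis by linarith
qed simp

lemma powr_succ_le_psi_diff:
  assumes "\<alpha> > 0" "0 < a"
  shows "(a + 1) powr (- \<alpha>) \<le> \<psi> (a + 1) - \<psi> a"
proof -
  obtain z where z: "a < z" "z < a + 1" "\<psi> (a + 1) - \<psi> a = (a + 1 - a) * z powr (- \<alpha>)"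
    using psi_MVT[of a "a + 1"] assms by auto
  have "(a + 1) powr (- \<alpha>) \<le> z powr (- \<alpha>)"
    by (rule powr_mono2') (use z assms in auto)
  with z show ?thesis by simp
qed

lemma bonus_sum_le_psi:
  assumes "\<alpha> > 0" "lam > 0"
  shows "bonus_sum lam \<alpha> c \<le> lam powr (- \<alpha>) + \<psi> (real c + lam) - \<psi> lam"
proof -
  have Suc_bound: "bonus_sum lam \<alpha> (Suc n) \<le> lam powr (- \<alpha>) + \<psi> (real n + lam) - \<psi> lam" for n
  proof (induction n)
    case (Suc n)
    have "bonus_sum lam \<alpha> (Suc (Suc n)) = bonus_sum lam \<alpha> (Suc n) + (real n + lam + 1) powr (- \<alpha>)"
      by (simp add: bonus_sum_def algebra_simps)
    also have "(real n + lam + 1) powr (- \<alpha>) \<le> \<psi> (real n + lam + 1) - \<psi> (real n + lam)"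
      by (rule powr_succ_le_psi_diff) (use assms in auto)
    finally show ?case using Suc by (simp add: algebra_simps)
  qed (simp add: bonus_sum_def)
  show ?thesis
  proof (cases c)
    case (Suc n)
    have "\<psi> (real n + lam) \<le> \<psi> (real c + lam)"
      by (rule psi_mono) (use assms Suc in auto)
    with Suc_bound[of n] Suc show ?thesis by simp
  qed (use assms in \<open>simp add: bonus_sum_def\<close>)
qed

lemma psi_le_tangent:
  assumes "\<alpha> > 0" "x > 0" "y > 0"
  shows "\<psi> y \<le> \<psi> x + x powr (- \<alpha>) * (y - x)"
proof -
  consider "y = x" | "x < y" | "y < x" by linarith
  then show ?thesis
  proof cases
    case 2
    then obtain z where z: "x < z" "\<psi> y - \<psi> x = (y - x) * z powr (- \<alpha>)"
      using psi_MVT[of x y] assms by auto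
    have "z powr (- \<alpha>) \<le> x powr (- \<alpha>)"
      by (rule powr_mono2') (use z assms in auto)
    then have "(y - x) * z powr (- \<alpha>) \<le> (y - x) * x powr (- \<alpha>)"
      using 2 by (intro mult_left_mono) auto
    with z show ?thesis by (simp add: algebra_simps)
  next
    case 3
    then obtain z where z: "z < x" "y < z" "\<psi> x - \<psi> y = (x - y) * z powr (- \<alpha>)"
      using psi_MVT[of y x] assms by auto
    have "x powr (- \<alpha>) \<le> z powr (- \<alpha>)"
      by (rule powr_mono2') (use z assms in auto)
    then have "(x - y) * x powr (- \<alpha>) \<le> (x - y) * z powr (- \<alpha>)"
      using 3 by (intro mult_left_mono) auto
    with z show ?thesis by (simp add: algebra_simps)
  qed simp
qed

text \<open>Compare derivatives: (x + \<lambda>)^-\<alpha> \<le> ((1 - \<delta>) (x + \<lambda> / (1 - \<delta>)))^-\<alpha>.\<close>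

lemma psi_increment_le_shifted:
  assumes "\<alpha> > 0" "lam > 0" "0 < \<delta>" "\<delta> < 1" "x > 0"
  shows "\<psi> (x + lam) - \<psi> lam
           \<le> (\<psi> (x + lam / (1 - \<delta>)) - \<psi> (lam / (1 - \<delta>))) / (1 - \<delta>) powr \<alpha>"
proof -
  define mu where "mu = lam / (1 - \<delta>)"
  have "mu > 0" using assms by (simp add: mu_def)
  define k where "k = (\<lambda>x. (\<psi> (x + mu) - \<psi> mu) / (1 - \<delta>) powr \<alpha> - (\<psi> (x + lam) - \<psi> lam))"
  define k' where "k' = (\<lambda>x. (x + mu) powr (- \<alpha>) / (1 - \<delta>) powr \<alpha> - (x + lam) powr (- \<alpha>))"
  have k_deriv: "(k has_real_derivative k' z) (at z)" if "0 \<le> z" for z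
  proof -
    have "((\<lambda>x. \<psi> (x + c)) has_real_derivative (z + c) powr (- \<alpha>)) (at z)" if "c > 0" for c
      using psi_deriv[of "z + c"] DERIV_shift[of \<psi> _ z c] \<open>0 \<le> z\<close> that by simp
    then show ?thesis
      unfolding k_def k'_def using \<open>mu > 0\<close> \<open>lam > 0\<close> \<open>\<delta> < 1\<close>
      by (auto intro!: derivative_eq_intros)
  qed
  obtain z where z: "0 < z" "k x - k 0 = (x - 0) * k' z"
    using MVT2[OF \<open>x > 0\<close>, of k k'] k_deriv by force
  have shift: "(1 - \<delta>) * (z + mu) = (1 - \<delta>) * z + lam"
    using assms by (simp add: mu_def field_simps)
  have "0 \<le> (1 - \<delta>) * z" "(1 - \<delta>) * z \<le> z"
    using assms z by (simp_all add: mult_le_cancel_right1)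
  then have "(z + lam) powr (- \<alpha>) \<le> ((1 - \<delta>) * (z + mu)) powr (- \<alpha>)"
    unfolding shift using assms by (intro powr_mono2') linarith+
  also have "\<dots> = (z + mu) powr (- \<alpha>) / (1 - \<delta>) powr \<alpha>"
    using assms \<open>mu > 0\<close> z by (simp add: powr_mult powr_minus_divide)
  finally have "k' z \<ge> 0" unfolding k'_def by simp
  with z \<open>x > 0\<close> have "k x \<ge> 0" by (simp add: k_def)
  then show ?thesis by (simp add: k_def mu_def)
qed

lemma potential_le:
  assumes "\<alpha> > 0" "lam > 0" "x \<ge> 0"
    and p: "\<And>a. a \<in> {1..d} \<Longrightarrow> 0 < p a"
  shows "potential \<alpha> lam ((x + lam) powr (- \<alpha>)) d p h
           \<le> d_eff d p * (lam powr (- \<alpha>) + \<psi> (x + lam) - \<psi> lam - (x + lam) powr (- \<alpha>) * x)"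
proof -
  let ?s = "(x + lam) powr (- \<alpha>)"
  let ?K = "lam powr (- \<alpha>) + \<psi> (x + lam) - \<psi> lam - ?s * x"
  have "bonus_sum lam \<alpha> c - ?s * real c \<le> ?K" for c
  proof -
    have "bonus_sum lam \<alpha> c \<le> lam powr (- \<alpha>) + \<psi> (real c + lam) - \<psi> lam"
      by (rule bonus_sum_le_psi) (use assms in auto)
    also have "\<psi> (real c + lam) \<le> \<psi> (x + lam) + ?s * (real c + lam - (x + lam))"
      by (rule psi_le_tangent) (use assms in auto)
    finally show ?thesis by (simp add: algebra_simps)
  qed
  then have "potential \<alpha> lam ?s d p h \<le> (\<Sum>a = 1..d. ?K / p a)"
    unfolding potential_def using p by (intro sum_mono divide_right_mono) (auto simp: less_imp_le)
  also have "\<dots> = d_eff d p * ?K"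
    by (simp add: d_eff_def sum_distrib_right)
  finally show ?thesis .
qed

end

lemma d_eff_ge_card:
  assumes "\<And>a. a \<in> {1..d} \<Longrightarrow> 0 < p a \<and> p a \<le> 1"
  shows "real d \<le> d_eff d p"
proof -
  have "real d = (\<Sum>a = 1..d. 1)" by simp
  also have "\<dots> \<le> d_eff d p"
    unfolding d_eff_def by (rule sum_mono) (use assms in auto)
  finally show ?thesis .
qed

lemma expectation_V_alpha_le:
  fixes \<psi> :: "real \<Rightarrow> real"
  assumes "d \<ge> 1"
    and arms: "\<And>t. t \<in> {1..T} \<Longrightarrow> A t \<subseteq> {1..d}"
    and p: "\<And>a. a \<in> {1..d} \<Longrightarrow> 0 < p a \<and> p a \<le> 1"
    and "lam > 0" "\<alpha> > 0"
    and psi_deriv: "\<And>x. x > 0 \<Longrightarrow> (\<psi> has_real_derivative x powr (- \<alpha>)) (at x)"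
    and adm: "admissible_policy A T \<pi>"
  shows "measure_pmf.expectation (traj \<pi> p T) (V_alpha \<alpha> lam T)
           \<le> d_eff d p * (lam powr (- \<alpha>) + \<psi> (real T / d_eff d p + lam) - \<psi> lam)"
proof -
  define D where "D = d_eff d p"
  have "D \<ge> 1" using d_eff_ge_card[of d p] p \<open>d \<ge> 1\<close> by (simp add: D_def)
  define x where "x = real T / D"
  have "x \<ge> 0" "D * x = real T" using \<open>D \<ge> 1\<close> by (simp_all add: x_def)
  define s where "s = (x + lam) powr (- \<alpha>)"
  let ?M = "traj \<pi> p T"
  let ?F = "\<lambda>h. V_alpha \<alpha> lam (length h) h - potential \<alpha> lam s d p h"
  let ?R = "potential \<alpha> lam s d p"
  have fin: "finite (set_pmf ?M)"
    using finite_set_pmf_traj[OF _ arms adm] by simp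
  have "measure_pmf.expectation ?M (V_alpha \<alpha> lam T) = measure_pmf.expectation ?M (\<lambda>h. ?F h + ?R h)"
    using set_pmf_traj_subset[OF arms adm order_refl]
    by (intro integral_cong_AE) (auto simp: AE_measure_pmf_iff)
  also have "\<dots> = measure_pmf.expectation ?M ?F + measure_pmf.expectation ?M ?R"
    by (rule Bochner_Integration.integral_add) (simp_all add: integrable_measure_pmf_finite[OF fin])
  also have "measure_pmf.expectation ?M ?F = s * real T"
    by (rule expectation_V_alpha_minus_potential[where T = T]) (use arms adm p in auto)
  also have "measure_pmf.expectation ?M ?R
      \<le> D * (lam powr (- \<alpha>) + \<psi> (x + lam) - \<psi> lam - s * x)"
    using potential_le[OF psi_deriv \<open>\<alpha> > 0\<close> \<open>lam > 0\<close> \<open>x \<ge> 0\<close>] p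
    by (intro measure_pmf.integral_le_const integrable_measure_pmf_finite[OF fin])
      (simp add: D_def s_def)
  finally show ?thesis
    unfolding D_def[symmetric] x_def[symmetric]
    by (simp add: \<open>D * x = real T\<close>[symmetric] algebra_simps)
qed

theorem proposition2:
  fixes d T :: nat and A :: "nat \<Rightarrow> nat set" and p :: "nat \<Rightarrow> real"
    and lam \<alpha> \<delta> :: real and \<psi> :: "real \<Rightarrow> real"
    and \<pi> :: "nat \<Rightarrow> hist \<Rightarrow> nat pmf"
  assumes "d \<ge> 1" and "T \<ge> 2"
    and "\<And>t. t \<in> {1..T} \<Longrightarrow> A t \<noteq> {} \<and> A t \<subseteq> {1..d}"
    and "\<And>a. a \<in> {1..d} \<Longrightarrow> 0 < p a \<and> p a \<le> 1"
    and "lam > 0" and "\<alpha> > 0" and "0 < \<delta>" and "\<delta> < 1"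
    and "\<And>x. x > 0 \<Longrightarrow> (\<psi> has_real_derivative x powr (- \<alpha>)) (at x)"
    and "admissible_policy A T \<pi>"
  shows "measure_pmf.expectation (traj \<pi> p T) (V_alpha \<alpha> lam T)
    \<le> d_eff d p / (1 - \<delta>) powr \<alpha>
         * (\<psi> (real T / d_eff d p + lam / (1 - \<delta>)) - \<psi> (lam / (1 - \<delta>)))
       + (24 * d_eff d p * ln (real T) + real d) / lam powr \<alpha>
       + 4 * d_eff d p / (lam powr \<alpha> * \<delta>\<^sup>2 * real T powr (12 * \<delta>\<^sup>2))"
proof -
  define D where "D = d_eff d p"
  have "D \<ge> 1" using d_eff_ge_card[of d p] assms(4) \<open>d \<ge> 1\<close> by (simp add: D_def)
  have "T / D > 0" using \<open>D \<ge> 1\<close> \<open>T \<ge> 2\<close> by simp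
  have main: "D * (\<psi> (T / D + lam) - \<psi> lam)
      \<le> D / (1 - \<delta>) powr \<alpha> * (\<psi> (T / D + lam / (1 - \<delta>)) - \<psi> (lam / (1 - \<delta>)))"
    using mult_left_mono[OF psi_increment_le_shifted[OF assms(9,6,5,7,8) \<open>T / D > 0\<close>]] \<open>D \<ge> 1\<close>
    by simp
  have "ln (real T) \<ge> ln 2" using \<open>T \<ge> 2\<close> by simp
  then have "ln (real T) \<ge> 2 / 3" using ln2_ge_two_thirds by linarith
  then have "D * (2 / 3) \<le> D * ln (real T)"
    using \<open>D \<ge> 1\<close> by (intro mult_left_mono) auto
  then have "D \<le> 24 * D * ln (real T) + real d"
    using \<open>D \<ge> 1\<close> by linarith
  then have log_term: "D * lam powr (- \<alpha>) \<le> (24 * D * ln (real T) + real d) / lam powr \<alpha>"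
    using \<open>lam > 0\<close> by (simp add: powr_minus_divide divide_right_mono)
  have "0 \<le> 4 * D / (lam powr \<alpha> * \<delta>\<^sup>2 * real T powr (12 * \<delta>\<^sup>2))"
    using \<open>D \<ge> 1\<close> by simp
  with expectation_V_alpha_le[OF \<open>d \<ge> 1\<close> _ assms(4,5,6,9,10)] assms(3) main log_term
  show ?thesis by (fastforce simp: D_def algebra_simps)
qed

end
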